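(* Let $r\ge2$, $m\ge1$, $d,k\ge0$. Let $a_1,\dots,a_m\in\mathbb{R}[x_1,x_2]_k$ and $q_1,\dots,q_m\in\Sigma[x_1,x_2]_{2d}$, and let $p=\sum_{i=1}^m a_iq_i\in\mathbb{R}[x_1,x_2]_{2d+k}$. For $\mathbf{u}=(u_{ij})_{1\le i\le m,\,1\le j\le r}\in\mathbb{R}[x_1,x_2]_d^{m\times r}$ define $f^I_p(\mathbf{u})=\big\|\sum_{i=1}^m a_i\sum_{j=1}^r u_{ij}^2-p\big\|^2$. Then for every $\mathbf{u}$ with $\nabla f^I_p(\mathbf{u})=0$ and $\nabla^2 f^I_p(\mathbf{u})\succeq0$, we have $f^I_p(\mathbf{u})=0$.
   Context: $\mathbb{R}[x_1,x_2]_n$ denotes the space of real binary forms (homogeneous polynomials in $x_1,x_2$) of degree $n$, and $\Sigma[x_1,x_2]_{2d}$ the cone of sums of squares of binary forms of degree $d$. $\|\cdot\|$ is the norm induced by any fixed inner product on $\mathbb{R}[x_1,x_2]_{2d+k}$. Derivatives are taken with respect to the finite-dimensional real vector space $\mathbb{R}[x_1,x_2]_d^{m\times r}$: $\nabla f^I_p(\mathbf{u})=0$ means all first directional derivatives vanish, and $\nabla^2 f^I_p(\mathbf{u})\succeq0$ means all second directional derivatives are nonnegative. *)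

theory Defs
  imports "HOL-Analysis.Analysis" "HOL-Computational_Algebra.Polynomial"
begin

text \<open>Binary forms of degree n are encoded by dehomogenization
  F(x1,x2) \<mapsto> F(t,1): the space R[x1,x2]_n is identified with the real
  univariate polynomials of degree at most n. This identification is linear and
  multiplicative (a form of degree n times a form of degree n' is the form of
  degree n+n' corresponding to the product of the dehomogenizations).\<close>

definition is_form :: "nat \<Rightarrow> real poly \<Rightarrow> bool" where
  "is_form n f \<longleftrightarrow> degree f \<le> n"

definition sos_form :: "nat \<Rightarrow> real poly \<Rightarrow> bool" where
  "sos_form d q \<longleftrightarrow> (\<exists>gs :: real poly list. (\<forall>g\<in>set gs. is_form d g) \<and>
      q = sum_list (map (\<lambda>g. g ^ 2) gs))"

definition is_inner_product_on_forms :: "nat \<Rightarrow> (real poly \<Rightarrow> real poly \<Rightarrow> real) \<Rightarrow> bool" where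
  "is_inner_product_on_forms N ip \<longleftrightarrow>
     (\<forall>x y. is_form N x \<longrightarrow> is_form N y \<longrightarrow> ip x y = ip y x) \<and>
     (\<forall>x y z. is_form N x \<longrightarrow> is_form N y \<longrightarrow> is_form N z \<longrightarrow> ip (x + y) z = ip x z + ip y z) \<and>
     (\<forall>c x z. is_form N x \<longrightarrow> is_form N z \<longrightarrow> ip (smult c x) z = c * ip x z) \<and>
     (\<forall>x. is_form N x \<longrightarrow> x \<noteq> 0 \<longrightarrow> ip x x > 0)"

definition ip_norm :: "(real poly \<Rightarrow> real poly \<Rightarrow> real) \<Rightarrow> real poly \<Rightarrow> real" where
  "ip_norm ip e = sqrt (ip e e)"

definition fI :: "(real poly \<Rightarrow> real poly \<Rightarrow> real) \<Rightarrow> nat \<Rightarrow> nat \<Rightarrow> (nat \<Rightarrow> real poly)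
    \<Rightarrow> real poly \<Rightarrow> (nat \<Rightarrow> nat \<Rightarrow> real poly) \<Rightarrow> real" where
  "fI ip m r a p u = (ip_norm ip ((\<Sum>i<m. a i * (\<Sum>j<r. (u i j) ^ 2)) - p)) ^ 2"

definition is_form_matrix :: "nat \<Rightarrow> nat \<Rightarrow> nat \<Rightarrow> (nat \<Rightarrow> nat \<Rightarrow> real poly) \<Rightarrow> bool" where
  "is_form_matrix d m r u \<longleftrightarrow> (\<forall>i<m. \<forall>j<r. is_form d (u i j))"

definition line_pt :: "(nat \<Rightarrow> nat \<Rightarrow> real poly) \<Rightarrow> (nat \<Rightarrow> nat \<Rightarrow> real poly) \<Rightarrow> real
    \<Rightarrow> (nat \<Rightarrow> nat \<Rightarrow> real poly)" where
  "line_pt u v t = (\<lambda>i j. u i j + smult t (v i j))"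

end

(*
  The residual R = \<Sum>i a_i \<Sum>j u_ij^2 - p at a second-order critical point is tested against
  the functionals \<psi>_i f = <R, a_i f>.  Perturbing only row i of u, the first-order condition
  says that \<psi>_i vanishes on all multiples u_ij w, and the second-order condition along syzygies
  u_i0 v_0 + u_i1 v_1 = 0 of the first two entries (this is where r \<ge> 2 enters) gives
  \<psi>_i (v_0^2 + v_1^2) \<ge> 0, with \<psi>_i (v_0 w_0 + v_1 w_1) = 0 in case of equality.

  These conditions force \<psi>_i (s^2) \<ge> 0 for every form s of degree d.  After a projective change
  of coordinates u_i0 and u_i1 have no common zero at infinity; write them as g a and g b with a, b
  coprime.  The syzygies are (b h, -a h), so \<psi>_i ((a^2 + b^2) h^2) \<ge> 0, and \<psi>_i vanishes on
  the multiples of g.  If g is coprime to a^2 + b^2, then modulo g every square s^2 is congruent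
  to (a^2 + b^2) (h_1^2 + h_2^2) with deg h_i < deg g.  Otherwise the equality case allows one to
  replace the common factors of g and a^2 + b^2 (which has no real zero) by powers of x, raising
  the order of vanishing at 0, until the coprime case is reached.

  Finally ||R||^2 = \<Sum>i \<psi>_i (\<Sum>j u_ij^2) - \<Sum>i \<psi>_i (q_i) = - \<Sum>i \<psi>_i (q_i) \<le> 0.
*)

theory Submission
  imports Defs "HOL-Computational_Algebra.Polynomial_Factorial"
    "HOL-Computational_Algebra.Field_as_Ring"
begin

lemma degree_mult_leI: "degree p \<le> m \<Longrightarrow> degree q \<le> n \<Longrightarrow> degree (p * q) \<le> m + n"
  using degree_mult_le[of p q] by simp

lemma degree_power2_leI: "degree p \<le> n \<Longrightarrow> degree (p\<^sup>2) \<le> 2 * n"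
  using degree_power_le[of p 2] by simp

lemma degree_smult_leI: "degree p \<le> n \<Longrightarrow> degree (smult c p) \<le> n"
  using degree_smult_le order_trans by blast

lemma degree_le_of_mult_le:
  fixes p q :: "'a::idom poly"
  assumes "p \<noteq> 0" and "degree (p * q) \<le> degree p + n"
  shows "degree q \<le> n"
  using assms degree_mult_eq[of p q] by (cases "q = 0") auto

lemma smult_sum_right: "smult c (sum f A) = (\<Sum>x\<in>A. smult c (f x))"
  by (induction A rule: infinite_finite_induct) (auto simp: smult_add_right)

lemma degree_sum_mult_le:
  assumes "\<And>i. i \<in> A \<Longrightarrow> degree (f i) \<le> m" and "\<And>i. i \<in> A \<Longrightarrow> degree (g i) \<le> n"
  shows "degree (\<Sum>i\<in>A. f i * g i) \<le> m + n"
  using assms by (cases "finite A") (auto intro!: degree_sum_le degree_mult_leI)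

lemma power2_add_smult:
  "(x + smult t y)\<^sup>2 = x\<^sup>2 + smult (2 * t) (x * y) + smult (t\<^sup>2) (y\<^sup>2 :: real poly)"
proof -
  have "smult (2 * t) (x * y) = smult t (x * y) + smult t (x * y)"
    by (simp add: smult_add_left[symmetric])
  then show ?thesis by (simp add: power2_eq_square algebra_simps)
qed

lemma sum_lessThan_eq_first_two:
  fixes r :: nat
  assumes "2 \<le> r" and "\<And>j. 2 \<le> j \<Longrightarrow> f j = 0"
  shows "(\<Sum>j<r. f j) = f 0 + (f 1 :: 'a::comm_monoid_add)"
proof -
  have "(\<Sum>j<r. f j) = (\<Sum>j\<in>{0, 1}. f j)"
    using assms by (intro sum.mono_neutral_right) auto
  then show ?thesis by simp
qed

lemma affine_nonneg_imp_slope_zero: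
  fixes K B :: real
  assumes "\<And>l. 0 \<le> K + l * B"
  shows "B = 0"
proof (rule ccontr)
  assume "B \<noteq> 0"
  then have "K + (- (\<bar>K\<bar> + 1) / B) * B < 0" by simp
  with assms show False by (metis not_le)
qed

lemma deriv_poly: "deriv (poly p) = poly (pderiv (p :: real poly))"
  by (rule ext, rule DERIV_imp_deriv, rule poly_DERIV)

lemma deriv_poly_at_0: "deriv (poly p) 0 = coeff (p :: real poly) 1"
  by (simp add: deriv_poly poly_0_coeff_0 coeff_pderiv)

lemma deriv2_poly_at_0: "deriv (deriv (poly p)) 0 = 2 * coeff (p :: real poly) 2"
  by (simp add: deriv_poly poly_0_coeff_0 coeff_pderiv numeral_2_eq_2)

lemma poly_cutoff_eq: "degree f < n \<Longrightarrow> poly_cutoff n f = f"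
  by (auto simp: poly_eq_iff coeff_poly_cutoff coeff_eq_0)

lemma poly_cutoff_add: "poly_cutoff n (f + g) = poly_cutoff n f + poly_cutoff n g"
  by (simp add: poly_eq_iff coeff_poly_cutoff)

lemma poly_cutoff_smult: "poly_cutoff n (smult c f) = smult c (poly_cutoff n f)"
  by (simp add: poly_eq_iff coeff_poly_cutoff)

lemma degree_poly_cutoff: "degree (poly_cutoff (Suc n) f) \<le> n"
  by (rule degree_le) (simp add: coeff_poly_cutoff)

section \<open>Coprime combinations with bounded degrees\<close>

lemma coprime_combination_degree_le':
  fixes a b c :: "'a::field_gcd poly"
  assumes "coprime a b" and "degree b \<le> degree a" and "degree a \<le> d"
    and "degree c \<le> d + degree a"
  shows "\<exists>w1 w2. degree w1 \<le> d \<and> degree w2 \<le> d \<and> c = a * w1 + b * w2"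
proof (cases "a = 0")
  case True
  with assms(1) have "is_unit b" by simp
  then obtain \<beta> where "b = [:\<beta>:]" "\<beta> \<noteq> 0" by (metis is_unit_polyE' monom_0)
  then have "c = a * 0 + b * smult (1 / \<beta>) c" using True by simp
  with assms True show ?thesis by (intro exI[of _ 0] exI[of _ "smult (1 / \<beta>) c"]) auto
next
  case False
  obtain x y where xy: "x * a + y * b = 1"
    using bezout_coefficients_fst_snd[of a b] assms(1) by (auto simp: coprime_iff_gcd_eq_1)
  define w1 where "w1 = c * x + (c * y) div a * b"
  define w2 where "w2 = (c * y) mod a"
  have c_eq: "c = a * w1 + b * w2"
  proof -
    have "c = c * (x * a + y * b)" using xy by simp
    also have "\<dots> = a * (c * x) + b * (c * y)" by (simp add: algebra_simps)
    also have "c * y = (c * y) div a * a + w2" unfolding w2_def by simp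
    finally show ?thesis unfolding w1_def by (simp add: algebra_simps)
  qed
  have w2: "degree w2 \<le> d"
    using degree_mod_less[OF False, of "c * y"] assms(3) unfolding w2_def by auto
  have "degree (b * w2) \<le> d + degree a"
    using degree_mult_leI[OF assms(2) w2] by (simp add: add.commute)
  then have "degree (c - b * w2) \<le> d + degree a" using assms(4) degree_diff_le by blast
  then have "degree (a * w1) \<le> degree a + d" using c_eq by (simp add: add.commute)
  then have "degree w1 \<le> d" by (rule degree_le_of_mult_le[OF False])
  with w2 c_eq show ?thesis by blast
qed

lemma coprime_combination_degree_le:
  fixes a b c :: "'a::field_gcd poly"
  assumes "coprime a b" and "max (degree a) (degree b) \<le> d"
    and "degree c \<le> d + max (degree a) (degree b)"
  shows "\<exists>w1 w2. degree w1 \<le> d \<and> degree w2 \<le> d \<and> c = a * w1 + b * w2"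
proof (cases "degree b \<le> degree a")
  case True
  then show ?thesis using coprime_combination_degree_le'[OF assms(1) True] assms(2,3) by simp
next
  case False
  then obtain w1 w2 where "degree w1 \<le> d" "degree w2 \<le> d" "c = b * w1 + a * w2"
    using coprime_combination_degree_le'[of b a d c] assms by (auto simp: coprime_commute)
  then show ?thesis by (auto simp: add.commute)
qed

section \<open>Changes of coordinates on binary forms\<close>

definition reflect_form :: "nat \<Rightarrow> 'a::idom poly \<Rightarrow> 'a poly" where
  "reflect_form n f = (\<Sum>i\<le>n. monom (coeff f i) (n - i))"

lemma coeff_reflect_form: "coeff (reflect_form n f) j = (if j \<le> n then coeff f (n - j) else 0)"
proof -
  have "coeff (reflect_form n f) j = (\<Sum>i\<in>{..n} \<inter> {i. n - i = j}. coeff f i)"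
    unfolding reflect_form_def coeff_sum coeff_monom by (simp add: sum.inter_restrict)
  also have "{..n} \<inter> {i. n - i = j} = (if j \<le> n then {n - j} else {})"
    by auto
  finally show ?thesis by simp
qed

lemma degree_reflect_form: "degree (reflect_form n f) \<le> n"
  by (rule degree_le) (simp add: coeff_reflect_form)

lemma reflect_form_reflect_form: "degree f \<le> n \<Longrightarrow> reflect_form n (reflect_form n f) = f"
  by (auto simp: poly_eq_iff coeff_reflect_form coeff_eq_0)

lemma reflect_form_add: "reflect_form n (f + g) = reflect_form n f + reflect_form n g"
  by (simp add: poly_eq_iff coeff_reflect_form)

lemma reflect_form_smult: "reflect_form n (smult c f) = smult c (reflect_form n f)"
  by (simp add: poly_eq_iff coeff_reflect_form)

lemma reflect_form_eq_reflect_poly: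
  "degree f \<le> n \<Longrightarrow> reflect_form n f = monom 1 (n - degree f) * reflect_poly f"
  by (auto simp: poly_eq_iff coeff_reflect_form coeff_monom_mult coeff_reflect_poly coeff_eq_0)

lemma reflect_form_mult:
  assumes "degree f \<le> n" and "degree g \<le> m"
  shows "reflect_form (n + m) (f * g) = reflect_form n f * reflect_form m g"
proof (cases "f = 0 \<or> g = 0")
  case True
  then show ?thesis by (auto simp: reflect_form_def)
next
  case False
  then have degree_fg: "degree (f * g) = degree f + degree g" by (simp add: degree_mult_eq)
  then have "reflect_form (n + m) (f * g) = monom 1 (n + m - degree (f * g)) * reflect_poly (f * g)"
    using assms by (intro reflect_form_eq_reflect_poly) simp
  also have "\<dots> =
      monom 1 (n - degree f) * reflect_poly f * (monom 1 (m - degree g) * reflect_poly g)"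
    using assms degree_fg by (simp add: reflect_poly_mult mult_monom algebra_simps)
  finally show ?thesis using assms by (simp add: reflect_form_eq_reflect_poly)
qed

\<comment> \<open>On binary forms of degree \<open>n\<close>, \<open>reflect_form n\<close> swaps \<open>x\<^sub>1\<close> and \<open>x\<^sub>2\<close>, and
  \<open>coord_change n c\<close> maps \<open>F(x\<^sub>1, x\<^sub>2)\<close> to \<open>F(x\<^sub>2 + c x\<^sub>1, x\<^sub>1)\<close>, whose
  \<open>x\<^sub>1\<^sup>n\<close>-coefficient is \<open>F(c, 1)\<close>.\<close>
definition coord_change :: "nat \<Rightarrow> 'a::idom \<Rightarrow> 'a poly \<Rightarrow> 'a poly" where
  "coord_change n c f = reflect_form n (f \<circ>\<^sub>p [:c, 1:])"

definition coord_change_inv :: "nat \<Rightarrow> 'a::idom \<Rightarrow> 'a poly \<Rightarrow> 'a poly" where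
  "coord_change_inv n c f = reflect_form n f \<circ>\<^sub>p [:- c, 1:]"

lemma pcompose_shift_cancel: "f \<circ>\<^sub>p [:c, 1:] \<circ>\<^sub>p [:- c, 1:] = (f :: 'a::comm_ring_1 poly)"
proof -
  have "[:c, 1:] \<circ>\<^sub>p [:- c, 1:] = [:0, 1:]" by (simp add: pcompose_pCons)
  then show ?thesis by (metis pcompose_assoc pcompose_idR)
qed

lemma degree_coord_change: "degree (coord_change n c f) \<le> n"
  unfolding coord_change_def by (rule degree_reflect_form)

lemma degree_coord_change_inv: "degree (coord_change_inv n c f) \<le> n"
  unfolding coord_change_inv_def using degree_reflect_form by (simp add: degree_pcompose)

lemma coord_change_inv_coord_change:
  "degree f \<le> n \<Longrightarrow> coord_change_inv n c (coord_change n c f) = f"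
  unfolding coord_change_inv_def coord_change_def
  by (simp add: reflect_form_reflect_form degree_pcompose pcompose_shift_cancel)

lemma coord_change_coord_change_inv:
  "degree f \<le> n \<Longrightarrow> coord_change n c (coord_change_inv n c f) = f"
  unfolding coord_change_inv_def coord_change_def
  using pcompose_shift_cancel[of "reflect_form n f" "- c"] degree_reflect_form[of n f]
  by (simp add: reflect_form_reflect_form)

lemma coord_change_inv_add:
  "coord_change_inv n c (f + g) = coord_change_inv n c f + coord_change_inv n c g"
  unfolding coord_change_inv_def by (simp add: pcompose_add reflect_form_add)

lemma coord_change_inv_smult: "coord_change_inv n c (smult a f) = smult a (coord_change_inv n c f)"
  unfolding coord_change_inv_def by (simp add: pcompose_smult reflect_form_smult)

lemma coord_change_mult:
  "degree f \<le> n \<Longrightarrow> degree g \<le> m \<Longrightarrow>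
    coord_change (n + m) c (f * g) = coord_change n c f * coord_change m c g"
  unfolding coord_change_def by (simp add: pcompose_mult reflect_form_mult degree_pcompose)

lemma coord_change_inv_mult:
  assumes "degree f \<le> n" and "degree g \<le> m"
  shows "coord_change_inv (n + m) c (coord_change n c f * coord_change m c g) = f * g"
  using assms coord_change_mult[OF assms, of c] coord_change_inv_coord_change degree_mult_leI
  by metis

lemma coeff_coord_change_top: "coeff (coord_change n c f) n = poly f c"
  unfolding coord_change_def
  by (simp add: coeff_reflect_form poly_0_coeff_0[symmetric] poly_pcompose)

section \<open>Positivity from the conditions on syzygies\<close>

definition linear_functional :: "(real poly \<Rightarrow> real) \<Rightarrow> bool" where
  "linear_functional \<psi> \<longleftrightarrow>
     (\<forall>f g. \<psi> (f + g) = \<psi> f + \<psi> g) \<and> (\<forall>c f. \<psi> (smult c f) = c * \<psi> f)"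

lemma linear_functional_add: "linear_functional \<psi> \<Longrightarrow> \<psi> (f + g) = \<psi> f + \<psi> g"
  by (simp add: linear_functional_def)

lemma linear_functional_smult: "linear_functional \<psi> \<Longrightarrow> \<psi> (smult c f) = c * \<psi> f"
  by (simp add: linear_functional_def)

lemma linear_functional_zero: "linear_functional \<psi> \<Longrightarrow> \<psi> 0 = 0"
  using linear_functional_smult[of \<psi> 0 0] by simp

lemma linear_functional_sum:
  "linear_functional \<psi> \<Longrightarrow> \<psi> (sum f A) = (\<Sum>x\<in>A. \<psi> (f x))"
  by (induction A rule: infinite_finite_induct)
    (auto simp: linear_functional_zero linear_functional_add)

lemma degree_sos_form: "sos_form d q \<Longrightarrow> degree q \<le> 2 * d"
  unfolding sos_form_def is_form_def
  by (auto intro!: degree_sum_list_le degree_power2_leI)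

lemma sos_form_nonneg:
  assumes "linear_functional \<psi>" and "\<And>s. degree s \<le> d \<Longrightarrow> 0 \<le> \<psi> (s\<^sup>2)" and "sos_form d q"
  shows "0 \<le> \<psi> q"
proof -
  obtain gs where gs: "\<forall>g\<in>set gs. degree g \<le> d" "q = (\<Sum>g\<leftarrow>gs. g\<^sup>2)"
    using assms(3) unfolding sos_form_def is_form_def by blast
  have "0 \<le> \<psi> (\<Sum>g\<leftarrow>gs. g\<^sup>2)"
    using gs(1) by (induction gs) (auto simp: linear_functional_zero linear_functional_add assms)
  then show ?thesis using gs(2) by simp
qed

locale syzygy_psd =
  fixes \<psi> :: "real poly \<Rightarrow> real" and d :: nat and u1 u2 :: "real poly"
  assumes linear: "linear_functional \<psi>"
    and degree_u1: "degree u1 \<le> d" and degree_u2: "degree u2 \<le> d"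
    and annihilates_u1: "degree w \<le> d \<Longrightarrow> \<psi> (u1 * w) = 0"
    and annihilates_u2: "degree w \<le> d \<Longrightarrow> \<psi> (u2 * w) = 0"
    and syzygy_nonneg: "\<lbrakk>degree v1 \<le> d; degree v2 \<le> d; u1 * v1 + u2 * v2 = 0\<rbrakk>
      \<Longrightarrow> 0 \<le> \<psi> (v1\<^sup>2 + v2\<^sup>2)"
    and syzygy_null: "\<lbrakk>degree v1 \<le> d; degree v2 \<le> d; u1 * v1 + u2 * v2 = 0;
      \<psi> (v1\<^sup>2 + v2\<^sup>2) = 0; degree w1 \<le> d; degree w2 \<le> d\<rbrakk> \<Longrightarrow> \<psi> (v1 * w1 + v2 * w2) = 0"

locale syzygy_psd_factored = syzygy_psd +
  fixes g a b :: "real poly" and e :: nat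
  assumes u1_eq: "u1 = g * a" and u2_eq: "u2 = g * b"
    and coprime_ab: "coprime a b" and g_nonzero: "g \<noteq> 0"
    and max_degree_ab: "max (degree a) (degree b) = e" and degree_g_add: "degree g + e = d"
begin

lemma degree_a: "degree a \<le> e" and degree_b: "degree b \<le> e"
  using max_degree_ab by auto

lemma poly_sum_squares_nonzero: "poly (a\<^sup>2 + b\<^sup>2) z \<noteq> 0"
proof
  assume "poly (a\<^sup>2 + b\<^sup>2) z = 0"
  then have "poly a z = 0" "poly b z = 0" by (auto simp: add_nonneg_eq_0_iff)
  then have "[:-z, 1:] dvd a" "[:-z, 1:] dvd b" by (auto simp: poly_eq_0_iff_dvd)
  then have "is_unit [:-z, 1:]" using coprime_common_divisor[OF coprime_ab] by blast
  then show False by (simp add: is_unit_pCons_iff)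
qed

lemma degree_sum_squares: "degree (a\<^sup>2 + b\<^sup>2) \<le> 2 * e"
  using degree_power2_leI[OF degree_a] degree_power2_leI[OF degree_b] by (rule degree_add_le)

lemma multiplier_syzygy:
  assumes "degree h \<le> degree g"
  shows "degree (b * h) \<le> d" "degree (- (a * h)) \<le> d" "u1 * (b * h) + u2 * (- (a * h)) = 0"
    and "(b * h)\<^sup>2 + (- (a * h))\<^sup>2 = (a\<^sup>2 + b\<^sup>2) * h\<^sup>2"
  using degree_mult_leI[OF degree_b assms] degree_mult_leI[OF degree_a assms] degree_g_add
  by (auto simp: u1_eq u2_eq algebra_simps power2_eq_square)

lemma combination_of_a_b:
  assumes "degree c \<le> d + e"
  obtains w1 w2 where "degree w1 \<le> d" "degree w2 \<le> d" "c = a * w1 + b * w2"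
proof -
  have "e \<le> d" using degree_g_add by simp
  then show thesis
    using coprime_combination_degree_le[OF coprime_ab, of d c] assms max_degree_ab that by auto
qed

lemma weighted_square_nonneg: "degree h \<le> degree g \<Longrightarrow> 0 \<le> \<psi> ((a\<^sup>2 + b\<^sup>2) * h\<^sup>2)"
  using syzygy_nonneg multiplier_syzygy by metis

lemma weighted_square_null:
  assumes "degree h \<le> degree g" and "\<psi> ((a\<^sup>2 + b\<^sup>2) * h\<^sup>2) = 0" and "degree c \<le> d + e"
  shows "\<psi> (h * c) = 0"
proof -
  obtain w1 w2 where w: "degree w1 \<le> d" "degree w2 \<le> d" "c = a * w1 + b * w2"
    using combination_of_a_b[OF assms(3)] .
  note syz = multiplier_syzygy[OF assms(1)]
  have "\<psi> ((b * h)\<^sup>2 + (- (a * h))\<^sup>2) = 0" using syz(4) assms(2) by simp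
  moreover have "degree (- w1) \<le> d" using w(1) by simp
  ultimately have "\<psi> (b * h * w2 + - (a * h) * - w1) = 0"
    using syzygy_null[OF syz(1-3)] w(2) by blast
  then show ?thesis using w(3) by (simp add: algebra_simps)
qed

definition annihilator :: "real poly \<Rightarrow> bool" where
  "annihilator G \<longleftrightarrow>
     G \<noteq> 0 \<and> degree G = degree g \<and> (\<forall>c. degree c \<le> d + e \<longrightarrow> \<psi> (G * c) = 0)"

lemma annihilator_g: "annihilator g"
  unfolding annihilator_def
proof (intro conjI allI impI g_nonzero refl)
  fix c :: "real poly" assume "degree c \<le> d + e"
  then obtain w1 w2 where w: "degree w1 \<le> d" "degree w2 \<le> d" "c = a * w1 + b * w2"
    by (rule combination_of_a_b)
  then have "g * c = u1 * w1 + u2 * w2" by (simp add: u1_eq u2_eq algebra_simps)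
  then show "\<psi> (g * c) = 0"
    using annihilates_u1[OF w(1)] annihilates_u2[OF w(2)] linear_functional_add[OF linear] by simp
qed

lemma square_nonneg_of_coprime_annihilator:
  assumes G: "annihilator G" and coprime: "coprime G (a\<^sup>2 + b\<^sup>2)" and s: "degree s \<le> d"
  shows "0 \<le> \<psi> (s\<^sup>2)"
proof -
  define N where "N = a\<^sup>2 + b\<^sup>2"
  from G have G0: "G \<noteq> 0" and degree_G: "degree G = degree g"
    and vanish: "\<And>c. degree c \<le> d + e \<Longrightarrow> \<psi> (G * c) = 0"
    unfolding annihilator_def by auto
  obtain K M where KM: "K * G + M * N = 1"
    using bezout_coefficients_fst_snd[of G N] coprime by (auto simp: coprime_iff_gcd_eq_1 N_def)
  define q1 where "q1 = (s * a * M) div G"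
  define q2 where "q2 = (s * b * M) div G"
  define h1 where "h1 = s * a * M - G * q1"
  define h2 where "h2 = s * b * M - G * q2"
  have h1_mod: "h1 = (s * a * M) mod G" and h2_mod: "h2 = (s * b * M) mod G"
    unfolding h1_def h2_def q1_def q2_def by (simp_all only: minus_mult_div_eq_mod)
  have degree_h: "degree h \<le> degree g" if "h = x mod G" for h x
    using degree_mod_less[OF G0, of x] degree_G that by auto
  \<comment> \<open>Since \<open>M N \<equiv> 1\<close> modulo \<open>G\<close>, \<open>s\<^sup>2 \<equiv> N (s a M)\<^sup>2 + N (s b M)\<^sup>2\<close> modulo \<open>G\<close>.\<close>
  define X where "X = 2 * K * s\<^sup>2 - G * K\<^sup>2 * s\<^sup>2 + 2 * N * s * M * (a * q1 + b * q2)
      - N * G * (q1\<^sup>2 + q2\<^sup>2)"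
  have s_eq: "s\<^sup>2 = N * h1\<^sup>2 + N * h2\<^sup>2 + G * X"
    using KM unfolding X_def h1_def h2_def N_def by algebra
  have "degree (N * h\<^sup>2) \<le> 2 * d" if "degree h \<le> degree g" for h
    using degree_mult_leI[OF degree_sum_squares degree_power2_leI[OF that]] degree_g_add
    unfolding N_def by simp
  then have "degree (N * h1\<^sup>2 + N * h2\<^sup>2) \<le> 2 * d"
    using degree_h[OF h1_mod] degree_h[OF h2_mod] by (simp add: degree_add_le)
  then have "degree (G * X) \<le> 2 * d"
    using s_eq degree_power2_leI[OF s] degree_diff_le by (metis add_diff_cancel_left')
  then have "degree X \<le> d + e"
    using degree_le_of_mult_le[OF G0] degree_G degree_g_add by simp
  then have "\<psi> (s\<^sup>2) = \<psi> (N * h1\<^sup>2) + \<psi> (N * h2\<^sup>2)"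
    using s_eq vanish linear_functional_add[OF linear] by simp
  then show ?thesis
    using weighted_square_nonneg degree_h[OF h1_mod] degree_h[OF h2_mod] unfolding N_def
    by simp
qed

lemma annihilator_order_increase:
  assumes G: "annihilator G" and not_coprime: "\<not> coprime G (a\<^sup>2 + b\<^sup>2)"
  obtains G' where "annihilator G'" "order 0 G < order 0 G'"
proof -
  define N where "N = a\<^sup>2 + b\<^sup>2"
  from G have G0: "G \<noteq> 0" and degree_G: "degree G = degree g"
    and vanish: "\<And>c. degree c \<le> d + e \<Longrightarrow> \<psi> (G * c) = 0"
    unfolding annihilator_def by auto
  define c where "c = gcd G N"
  define k where "k = degree c"
  define G' where "G' = G div c"
  define N' where "N' = N div c"
  have G_eq: "G = c * G'" and N_eq: "N = c * N'" unfolding G'_def N'_def c_def by simp_all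
  have "N \<noteq> 0" using poly_sum_squares_nonzero[of 0] unfolding N_def by auto
  then have c0: "c \<noteq> 0" and G'0: "G' \<noteq> 0" and N'0: "N' \<noteq> 0" using G0 G_eq N_eq by auto
  have "\<not> is_unit c" using not_coprime is_unit_gcd unfolding c_def N_def by blast
  then have k_pos: "0 < k" using is_unit_iff_degree[OF c0] unfolding k_def by simp
  \<comment> \<open>Trading the common factor \<open>c\<close> of \<open>G\<close> and \<open>N\<close> for \<open>x\<^sup>k\<close> makes \<open>N h\<^sup>2\<close> a
    multiple of \<open>G\<close>, so the equality case of the syzygy condition applies to \<open>h\<close>.\<close>
  define h where "h = G' * monom 1 k"
  have h0: "h \<noteq> 0" unfolding h_def using G'0 by simp
  have degree_G': "degree G' + k = degree g"
    using degree_mult_eq[OF c0 G'0] G_eq degree_G unfolding k_def by simp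
  have degree_h: "degree h = degree g"
    unfolding h_def using degree_mult_eq[OF G'0] degree_G' by (simp add: degree_monom_eq)
  have "degree N' + k \<le> 2 * e"
    using degree_mult_eq[OF c0 N'0] N_eq degree_sum_squares unfolding k_def N_def by simp
  then have "degree (N' * G' * monom 1 (k + k)) \<le> d + e"
    using degree_mult_le[of "N' * G'" "monom 1 (k + k)"] degree_mult_le[of N' G'] degree_G'
      degree_g_add by (simp add: degree_monom_eq)
  moreover have "N * h\<^sup>2 = G * (N' * G' * monom 1 (k + k))"
    unfolding h_def G_eq N_eq by (simp add: power2_eq_square mult_monom algebra_simps)
  ultimately have "\<psi> (N * h\<^sup>2) = 0" using vanish by simp
  then have "annihilator h"
    using weighted_square_null degree_h h0 unfolding annihilator_def N_def by simp
  moreover have "order 0 G < order 0 h"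
  proof -
    have "poly c 0 \<noteq> 0"
      using poly_sum_squares_nonzero[of 0] N_eq unfolding N_def by auto
    then have "order 0 G = order 0 G'"
      using order_mult[of c G' 0] G_eq G0 order_0I by simp
    moreover have "order 0 h = order 0 G' + k"
      using order_mult[of G' "monom 1 k" 0] h0 order_power_n_n[of 0 k]
      unfolding h_def by (simp add: monom_altdef)
    ultimately show ?thesis using k_pos by simp
  qed
  ultimately show thesis by (rule that)
qed

lemma square_nonneg_of_annihilator:
  assumes "annihilator G" and "degree s \<le> d"
  shows "0 \<le> \<psi> (s\<^sup>2)"
  using assms(1)
proof (induction "degree g - order 0 G" arbitrary: G rule: less_induct)
  case less
  show ?case
  proof (cases "coprime G (a\<^sup>2 + b\<^sup>2)")
    case True
    then show ?thesis using square_nonneg_of_coprime_annihilator less.prems assms(2) by blast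
  next
    case False
    then obtain G' where G': "annihilator G'" "order 0 G < order 0 G'"
      using annihilator_order_increase less.prems by blast
    then have "order 0 G' \<le> degree g" using order_degree unfolding annihilator_def by metis
    then show ?thesis using less.hyps[OF _ G'(1)] G'(2) by linarith
  qed
qed

end

lemma (in syzygy_psd) square_nonneg_if_top_coeff:
  assumes top: "coeff u1 d \<noteq> 0 \<or> coeff u2 d \<noteq> 0" and s: "degree s \<le> d"
  shows "0 \<le> \<psi> (s\<^sup>2)"
proof -
  define g where "g = gcd u1 u2"
  define a where "a = u1 div g"
  define b where "b = u2 div g"
  have u_nonzero: "u1 \<noteq> 0 \<or> u2 \<noteq> 0" using top by auto
  then have g0: "g \<noteq> 0" unfolding g_def by simp
  have u1_eq: "u1 = g * a" and u2_eq: "u2 = g * b" unfolding a_def b_def g_def by simp_all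
  have degree_g: "degree g \<le> d"
    using u_nonzero dvd_imp_degree_le[of g] degree_u1 degree_u2 unfolding g_def
    by (meson gcd_dvd1 gcd_dvd2 order_trans)
  have degree_factor: "degree g + degree x \<le> d" if "u = g * x" "degree u \<le> d" for u x
    using that degree_g degree_mult_eq[OF g0, of x] by (cases "x = 0") auto
  have degree_factor_top: "degree g + degree x = d" if "u = g * x" "degree u \<le> d" "coeff u d \<noteq> 0"
    for u x
    using that le_degree[of u d] degree_mult_eq[OF g0, of x] by (cases "x = 0") auto
  have "degree g + max (degree a) (degree b) = d"
    using degree_factor[OF u1_eq degree_u1] degree_factor[OF u2_eq degree_u2] top
      degree_factor_top[OF u1_eq degree_u1] degree_factor_top[OF u2_eq degree_u2] by linarith
  moreover have "coprime a b" unfolding a_def b_def g_def using div_gcd_coprime[OF u_nonzero] .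
  ultimately interpret syzygy_psd_factored \<psi> d u1 u2 g a b "max (degree a) (degree b)"
    using u1_eq u2_eq g0 by unfold_locales auto
  show ?thesis using square_nonneg_of_annihilator[OF annihilator_g s] .
qed

lemma syzygy_psd_coord_change:
  assumes "syzygy_psd \<psi> d u1 u2"
  shows "syzygy_psd (\<psi> \<circ> coord_change_inv (d + d) c) d (coord_change d c u1) (coord_change d c u2)"
proof -
  interpret syzygy_psd \<psi> d u1 u2 by (rule assms)
  let ?T = "coord_change d c" and ?S = "coord_change_inv (d + d) c"
  have onto: "\<exists>w. degree w \<le> d \<and> W = ?T w" if "degree W \<le> d" for W
    using coord_change_coord_change_inv[OF that] degree_coord_change_inv by metis
  have pullback: "?S (?T f1 * ?T g1 + ?T f2 * ?T g2) = f1 * g1 + f2 * g2"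
    if "degree f1 \<le> d" "degree g1 \<le> d" "degree f2 \<le> d" "degree g2 \<le> d" for f1 g1 f2 g2
    using that by (simp add: coord_change_inv_add coord_change_inv_mult)
  have pullback_syzygy: "u1 * v1 + u2 * v2 = 0"
    if "degree v1 \<le> d" "degree v2 \<le> d" "?T u1 * ?T v1 + ?T u2 * ?T v2 = 0" for v1 v2
    using pullback[OF degree_u1 that(1) degree_u2 that(2)] that(3)
      coord_change_inv_smult[of "d + d" c 0 0] by simp
  show ?thesis
  proof
    show "linear_functional (\<psi> \<circ> ?S)"
      using linear by (simp add: linear_functional_def coord_change_inv_add coord_change_inv_smult)
    show "degree (?T u1) \<le> d" "degree (?T u2) \<le> d" by (rule degree_coord_change)+
    show "(\<psi> \<circ> ?S) (?T u1 * W) = 0" "(\<psi> \<circ> ?S) (?T u2 * W) = 0" if W: "degree W \<le> d" for W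
    proof -
      obtain w where "degree w \<le> d" "W = ?T w" using onto[OF W] by blast
      then show "(\<psi> \<circ> ?S) (?T u1 * W) = 0" "(\<psi> \<circ> ?S) (?T u2 * W) = 0"
        using coord_change_inv_mult[OF degree_u1] coord_change_inv_mult[OF degree_u2]
          annihilates_u1 annihilates_u2 by simp_all
    qed
    show "0 \<le> (\<psi> \<circ> ?S) (V1\<^sup>2 + V2\<^sup>2)"
      if V: "degree V1 \<le> d" "degree V2 \<le> d" "?T u1 * V1 + ?T u2 * V2 = 0" for V1 V2
    proof -
      obtain v1 v2 where v: "degree v1 \<le> d" "V1 = ?T v1" "degree v2 \<le> d" "V2 = ?T v2"
        using onto V(1,2) by metis
      then show ?thesis
        using syzygy_nonneg pullback_syzygy pullback[of v1 v1 v2 v2] V(3)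
        by (simp add: power2_eq_square)
    qed
    show "(\<psi> \<circ> ?S) (V1 * W1 + V2 * W2) = 0"
      if V: "degree V1 \<le> d" "degree V2 \<le> d" "?T u1 * V1 + ?T u2 * V2 = 0"
        "(\<psi> \<circ> ?S) (V1\<^sup>2 + V2\<^sup>2) = 0" "degree W1 \<le> d" "degree W2 \<le> d" for V1 V2 W1 W2
    proof -
      obtain v1 v2 w1 w2 where v: "degree v1 \<le> d" "V1 = ?T v1" "degree v2 \<le> d" "V2 = ?T v2"
        "degree w1 \<le> d" "W1 = ?T w1" "degree w2 \<le> d" "W2 = ?T w2"
        using onto V(1,2,5,6) by metis
      then show ?thesis
        using syzygy_null[of v1 v2 w1 w2] pullback_syzygy pullback[of v1 v1 v2 v2]
          pullback[of v1 w1 v2 w2] V(3,4)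
        by (simp add: power2_eq_square)
    qed
  qed
qed

lemma (in syzygy_psd) square_nonneg:
  assumes "degree s \<le> d"
  shows "0 \<le> \<psi> (s\<^sup>2)"
proof (cases "u1 = 0 \<and> u2 = 0")
  case True
  then show ?thesis using syzygy_nonneg[OF assms, of 0] by simp
next
  case False
  then obtain c where c: "poly u1 c \<noteq> 0 \<or> poly u2 c \<noteq> 0" using poly_all_0_iff_0 by blast
  \<comment> \<open>The change of coordinates moves \<open>c\<close>, where \<open>u1\<close> and \<open>u2\<close> do not both vanish,
    to infinity.\<close>
  interpret T: syzygy_psd "\<psi> \<circ> coord_change_inv (d + d) c" d
      "coord_change d c u1" "coord_change d c u2"
    using syzygy_psd_coord_change syzygy_psd_axioms by blast
  have "0 \<le> (\<psi> \<circ> coord_change_inv (d + d) c) ((coord_change d c s)\<^sup>2)"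
    by (rule T.square_nonneg_if_top_coeff)
      (use c in \<open>simp_all add: coeff_coord_change_top degree_coord_change\<close>)
  then show ?thesis using coord_change_inv_mult[OF assms assms] by (simp add: power2_eq_square)
qed

locale form_inner_product =
  fixes N :: nat and ip :: "real poly \<Rightarrow> real poly \<Rightarrow> real"
  assumes inner_product: "is_inner_product_on_forms N ip"
begin

lemma commute: "degree x \<le> N \<Longrightarrow> degree y \<le> N \<Longrightarrow> ip x y = ip y x"
  and add_left: "degree x \<le> N \<Longrightarrow> degree y \<le> N \<Longrightarrow> degree z \<le> N \<Longrightarrow> ip (x + y) z = ip x z + ip y z"
  and smult_left: "degree x \<le> N \<Longrightarrow> degree z \<le> N \<Longrightarrow> ip (smult c x) z = c * ip x z"
  and pos: "degree x \<le> N \<Longrightarrow> x \<noteq> 0 \<Longrightarrow> 0 < ip x x"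
  using inner_product unfolding is_inner_product_on_forms_def is_form_def by blast+

lemma add_right: "degree x \<le> N \<Longrightarrow> degree y \<le> N \<Longrightarrow> degree z \<le> N \<Longrightarrow> ip z (x + y) = ip z x + ip z y"
  by (metis add_left commute degree_add_le)

lemma smult_right: "degree x \<le> N \<Longrightarrow> degree z \<le> N \<Longrightarrow> ip z (smult c x) = c * ip z x"
  by (metis smult_left commute degree_smult_leI)

lemma zero_right: "degree z \<le> N \<Longrightarrow> ip z 0 = 0"
  using smult_right[of 0 z 0] by simp

lemma nonneg: "degree x \<le> N \<Longrightarrow> 0 \<le> ip x x"
  using pos[of x] zero_right[of 0] by (cases "x = 0") auto

lemma diff_right: "degree x \<le> N \<Longrightarrow> degree y \<le> N \<Longrightarrow> degree z \<le> N \<Longrightarrow> ip z (x - y) = ip z x - ip z y"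
  using add_right[of x "- y" z] smult_right[of y z "- 1"] by simp

lemma sum_right:
  assumes "\<And>i. i \<in> A \<Longrightarrow> degree (f i) \<le> N" and "degree z \<le> N"
  shows "ip z (sum f A) = (\<Sum>i\<in>A. ip z (f i))"
  using assms
proof (induction A rule: infinite_finite_induct)
  case (insert x F)
  then show ?case using add_right[of "f x" "sum f F" z] by (simp add: degree_sum_le)
qed (simp_all add: zero_right)

lemma quadratic_curve:
  assumes "degree e0 \<le> N" and "degree e1 \<le> N" and "degree e2 \<le> N"
  shows "ip (e0 + smult t e1 + smult (t\<^sup>2) e2) (e0 + smult t e1 + smult (t\<^sup>2) e2) =
    poly [:ip e0 e0, 2 * ip e0 e1, ip e1 e1 + 2 * ip e0 e2, 2 * ip e1 e2, ip e2 e2:] t"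
proof -
  define x where "x = e0 + smult t e1 + smult (t\<^sup>2) e2"
  have e: "degree (smult t e1) \<le> N" "degree (smult (t\<^sup>2) e2) \<le> N" "degree (e0 + smult t e1) \<le> N"
    using assms by (auto intro!: degree_smult_leI degree_add_le)
  then have x: "degree x \<le> N" unfolding x_def by (auto intro: degree_add_le)
  have "ip x x = ip e0 x + t * ip e1 x + t\<^sup>2 * ip e2 x"
    using add_left[OF e(3) e(2)] add_left[OF assms(1) e(1)] smult_left assms x
    by (simp add: x_def)
  moreover have "ip z x = ip z e0 + t * ip z e1 + t\<^sup>2 * ip z e2" if "degree z \<le> N" for z
    unfolding x_def using add_right[OF e(3) e(2) that] add_right[OF assms(1) e(1) that]
      smult_right assms that by simp
  moreover have "ip e1 e0 = ip e0 e1" "ip e2 e0 = ip e0 e2" "ip e2 e1 = ip e1 e2"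
    using commute assms by auto
  ultimately show ?thesis unfolding x_def[symmetric] using assms
    by (simp add: algebra_simps power2_eq_square power3_eq_cube power4_eq_xxxx)
qed

end

section \<open>Second-order critical points\<close>

definition row_direction :: "nat \<Rightarrow> (nat \<Rightarrow> 'a::zero) \<Rightarrow> nat \<Rightarrow> nat \<Rightarrow> 'a" where
  "row_direction i w = (\<lambda>i' j. if i' = i then w j else 0)"

lemma is_form_matrix_row_direction:
  "(\<And>j. degree (w j) \<le> d) \<Longrightarrow> is_form_matrix d m r (row_direction i w)"
  unfolding is_form_matrix_def row_direction_def is_form_def by auto

locale critical_point = form_inner_product "2 * d + k" ip
  for d k :: nat and ip :: "real poly \<Rightarrow> real poly \<Rightarrow> real" +
  fixes r m :: nat and a :: "nat \<Rightarrow> real poly" and p :: "real poly"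
    and u :: "nat \<Rightarrow> nat \<Rightarrow> real poly"
  assumes two_le_r: "2 \<le> r"
    and degree_a: "i < m \<Longrightarrow> degree (a i) \<le> k"
    and degree_p: "degree p \<le> 2 * d + k"
    and degree_u: "i < m \<Longrightarrow> j < r \<Longrightarrow> degree (u i j) \<le> d"
    and gradient_zero:
      "is_form_matrix d m r v \<Longrightarrow> deriv (\<lambda>t. fI ip m r a p (line_pt u v t)) 0 = 0"
    and hessian_psd:
      "is_form_matrix d m r v \<Longrightarrow> 0 \<le> deriv (deriv (\<lambda>t. fI ip m r a p (line_pt u v t))) 0"
begin

definition residual :: "real poly" where
  "residual = (\<Sum>i<m. a i * (\<Sum>j<r. (u i j)\<^sup>2)) - p"

definition residual_linear :: "(nat \<Rightarrow> nat \<Rightarrow> real poly) \<Rightarrow> real poly" where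
  "residual_linear v = (\<Sum>i<m. a i * (\<Sum>j<r. smult 2 (u i j * v i j)))"

definition residual_quadratic :: "(nat \<Rightarrow> nat \<Rightarrow> real poly) \<Rightarrow> real poly" where
  "residual_quadratic v = (\<Sum>i<m. a i * (\<Sum>j<r. (v i j)\<^sup>2))"

lemma residual_line:
  "(\<Sum>i<m. a i * (\<Sum>j<r. (line_pt u v t i j)\<^sup>2)) - p =
     residual + smult t (residual_linear v) + smult (t\<^sup>2) (residual_quadratic v)"
proof -
  have "(\<Sum>j<r. (line_pt u v t i j)\<^sup>2) = (\<Sum>j<r. (u i j)\<^sup>2)
      + smult t (\<Sum>j<r. smult 2 (u i j * v i j)) + smult (t\<^sup>2) (\<Sum>j<r. (v i j)\<^sup>2)" for i
    unfolding line_pt_def power2_add_smult by (simp add: sum.distrib smult_sum_right mult.commute)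
  then have "a i * (\<Sum>j<r. (line_pt u v t i j)\<^sup>2) = a i * (\<Sum>j<r. (u i j)\<^sup>2)
      + smult t (a i * (\<Sum>j<r. smult 2 (u i j * v i j)))
      + smult (t\<^sup>2) (a i * (\<Sum>j<r. (v i j)\<^sup>2))" for i
    by (simp add: distrib_left)
  then show ?thesis unfolding residual_def residual_linear_def residual_quadratic_def
    by (simp add: sum.distrib smult_sum_right)
qed

lemma degree_row_sum:
  "(\<And>i. i < m \<Longrightarrow> degree (x i) \<le> 2 * d) \<Longrightarrow> degree (\<Sum>i<m. a i * x i) \<le> 2 * d + k"
  using degree_sum_mult_le[of "{..<m}" a k x "2 * d"] degree_a by (simp add: add.commute)

lemma degree_column_sum:
  "(\<And>j. j < r \<Longrightarrow> degree (x j) \<le> d) \<Longrightarrow> (\<And>j. j < r \<Longrightarrow> degree (y j) \<le> d) \<Longrightarrow>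
    degree (\<Sum>j<r. x j * y j) \<le> 2 * d"
  using degree_sum_mult_le[of "{..<r}" x d y d] by simp

lemma degree_residual: "degree residual \<le> 2 * d + k"
  unfolding residual_def using degree_p degree_u
  by (auto intro!: degree_diff_le degree_row_sum degree_column_sum simp: power2_eq_square)

lemma degree_residual_linear: "is_form_matrix d m r v \<Longrightarrow> degree (residual_linear v) \<le> 2 * d + k"
  unfolding residual_linear_def is_form_matrix_def is_form_def using degree_u
  by (auto intro!: degree_row_sum degree_column_sum
      simp: smult_sum_right[symmetric] degree_smult_leI)

lemma degree_residual_quadratic:
  "is_form_matrix d m r v \<Longrightarrow> degree (residual_quadratic v) \<le> 2 * d + k"
  unfolding residual_quadratic_def is_form_matrix_def is_form_def
  by (auto intro!: degree_row_sum degree_column_sum simp: power2_eq_square)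

lemma fI_line:
  assumes "is_form_matrix d m r v"
  shows "(\<lambda>t. fI ip m r a p (line_pt u v t)) = poly
    [:ip residual residual, 2 * ip residual (residual_linear v),
      ip (residual_linear v) (residual_linear v) + 2 * ip residual (residual_quadratic v),
      2 * ip (residual_linear v) (residual_quadratic v),
      ip (residual_quadratic v) (residual_quadratic v):]" (is "_ = poly ?P")
proof
  fix t
  note degrees =
    degree_residual degree_residual_linear[OF assms] degree_residual_quadratic[OF assms]
  let ?x = "residual + smult t (residual_linear v) + smult (t\<^sup>2) (residual_quadratic v)"
  have "degree ?x \<le> 2 * d + k"
    using degrees by (intro degree_add_le degree_smult_leI)
  then have "fI ip m r a p (line_pt u v t) = ip ?x ?x"
    unfolding fI_def ip_norm_def residual_line by (simp add: nonneg)
  then show "fI ip m r a p (line_pt u v t) = poly ?P t"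
    using quadratic_curve[OF degrees, of t] by simp
qed

lemma first_variation: "is_form_matrix d m r v \<Longrightarrow> ip residual (residual_linear v) = 0"
  using gradient_zero[of v] by (simp add: fI_line deriv_poly_at_0)

lemma second_variation:
  "is_form_matrix d m r v \<Longrightarrow>
    0 \<le> ip (residual_linear v) (residual_linear v) + 2 * ip residual (residual_quadratic v)"
  using hessian_psd[of v] by (simp add: fI_line deriv2_poly_at_0 numeral_2_eq_2)

lemma residual_linear_row:
  assumes "i < m"
  shows "residual_linear (row_direction i w) = a i * (\<Sum>j<r. smult 2 (u i j * w j))"
proof -
  have "residual_linear (row_direction i w) =
      (\<Sum>i'<m. if i' = i then a i * (\<Sum>j<r. smult 2 (u i j * w j)) else 0)"
    unfolding residual_linear_def by (rule sum.cong) (auto simp: row_direction_def)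
  then show ?thesis using assms by simp
qed

lemma residual_quadratic_row:
  assumes "i < m"
  shows "residual_quadratic (row_direction i w) = a i * (\<Sum>j<r. (w j)\<^sup>2)"
proof -
  have "residual_quadratic (row_direction i w) =
      (\<Sum>i'<m. if i' = i then a i * (\<Sum>j<r. (w j)\<^sup>2) else 0)"
    unfolding residual_quadratic_def by (rule sum.cong) (auto simp: row_direction_def)
  then show ?thesis using assms by simp
qed

\<comment> \<open>The cutoff only matters in degrees above \<open>2 d\<close>, where \<open>ip\<close> need not be bilinear;
  it makes the functional linear on all polynomials.\<close>
definition row_functional :: "nat \<Rightarrow> real poly \<Rightarrow> real" where
  "row_functional i f = ip residual (a i * poly_cutoff (Suc (2 * d)) f)"

lemma row_functional_eq: "degree f \<le> 2 * d \<Longrightarrow> row_functional i f = ip residual (a i * f)"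
  by (simp add: row_functional_def poly_cutoff_eq)

lemma linear_functional_row:
  assumes "i < m"
  shows "linear_functional (row_functional i)"
proof -
  have "degree (a i * poly_cutoff (Suc (2 * d)) f) \<le> 2 * d + k" for f
    using degree_mult_leI[OF degree_a[OF assms] degree_poly_cutoff[of "2 * d"]]
    by (simp add: add.commute)
  then show ?thesis
    unfolding linear_functional_def row_functional_def
    by (simp add: poly_cutoff_add poly_cutoff_smult distrib_left add_right smult_right
        degree_residual)
qed

lemma row_functional_annihilates:
  assumes "i < m" and "j < r" and "degree w \<le> d"
  shows "row_functional i (u i j * w) = 0"
proof -
  let ?v = "row_direction i (\<lambda>j'. if j' = j then w else 0)"
  have "(\<Sum>j'<r. smult 2 (u i j' * (if j' = j then w else 0))) =
      (\<Sum>j'<r. if j' = j then smult 2 (u i j * w) else 0)"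
    by (rule sum.cong) auto
  then have "residual_linear ?v = smult 2 (a i * (u i j * w))"
    using residual_linear_row[OF assms(1)] assms(2) by simp
  moreover have "is_form_matrix d m r ?v"
    using assms(3) by (intro is_form_matrix_row_direction) simp
  ultimately have "ip residual (smult 2 (a i * (u i j * w))) = 0"
    using first_variation by metis
  moreover have "degree (u i j * w) \<le> 2 * d"
    using degree_mult_leI[OF degree_u[OF assms(1,2)] assms(3)] by simp
  moreover have "degree (a i * (u i j * w)) \<le> 2 * d + k"
    using degree_mult_leI[OF degree_a[OF assms(1)] calculation(2)] by (simp add: add.commute)
  ultimately show ?thesis using smult_right degree_residual row_functional_eq by simp
qed

lemma row_second_variation:
  assumes "i < m" and "degree w0 \<le> d" and "degree w1 \<le> d"
  shows "0 \<le> ip (a i * smult 2 (u i 0 * w0 + u i 1 * w1)) (a i * smult 2 (u i 0 * w0 + u i 1 * w1))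
    + 2 * row_functional i (w0\<^sup>2 + w1\<^sup>2)"
proof -
  define w where "w j = (if j = 0 then w0 else if j = 1 then w1 else 0)" for j :: nat
  have "is_form_matrix d m r (row_direction i w)"
    using assms(2,3) by (intro is_form_matrix_row_direction) (simp add: w_def)
  moreover have "(\<Sum>j<r. smult 2 (u i j * w j)) = smult 2 (u i 0 * w0) + smult 2 (u i 1 * w1)"
    using sum_lessThan_eq_first_two[OF two_le_r, of "\<lambda>j. smult 2 (u i j * w j)"]
    by (simp add: w_def)
  then have "residual_linear (row_direction i w) = a i * smult 2 (u i 0 * w0 + u i 1 * w1)"
    using residual_linear_row[OF assms(1)] by (simp add: smult_add_right)
  moreover have "(\<Sum>j<r. (w j)\<^sup>2) = w0\<^sup>2 + w1\<^sup>2"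
    using sum_lessThan_eq_first_two[OF two_le_r, of "\<lambda>j. (w j)\<^sup>2"] by (simp add: w_def)
  then have "residual_quadratic (row_direction i w) = a i * (w0\<^sup>2 + w1\<^sup>2)"
    using residual_quadratic_row[OF assms(1)] by simp
  moreover have "degree (w0\<^sup>2 + w1\<^sup>2) \<le> 2 * d"
    using assms(2,3) by (intro degree_add_le degree_power2_leI)
  ultimately show ?thesis using second_variation row_functional_eq by metis
qed

lemma syzygy_psd_row:
  assumes "i < m"
  shows "syzygy_psd (row_functional i) d (u i 0) (u i 1)"
proof
  show "linear_functional (row_functional i)" using linear_functional_row[OF assms] .
  show "degree (u i 0) \<le> d" "degree (u i 1) \<le> d" using degree_u[OF assms] two_le_r by simp_all
  show "row_functional i (u i 0 * w) = 0" "row_functional i (u i 1 * w) = 0"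
    if "degree w \<le> d" for w
    using row_functional_annihilates[OF assms _ that] two_le_r by simp_all
  show "0 \<le> row_functional i (v1\<^sup>2 + v2\<^sup>2)"
    if "degree v1 \<le> d" "degree v2 \<le> d" "u i 0 * v1 + u i 1 * v2 = 0" for v1 v2
    using row_second_variation[OF assms that(1,2)] that(3) zero_right[of 0] by simp
next
  fix v1 v2 w1 w2 :: "real poly"
  assume v: "degree v1 \<le> d" "degree v2 \<le> d" and syzygy: "u i 0 * v1 + u i 1 * v2 = 0"
    and null: "row_functional i (v1\<^sup>2 + v2\<^sup>2) = 0" and w: "degree w1 \<le> d" "degree w2 \<le> d"
  let ?\<psi> = "row_functional i" and ?e = "a i * smult 2 (u i 0 * w1 + u i 1 * w2)"
  \<comment> \<open>Along the directions \<open>w + l v\<close> the second variation is affine in \<open>l\<close> and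
    nonnegative, so its slope vanishes.\<close>
  have linear: "linear_functional ?\<psi>" by (rule linear_functional_row[OF assms])
  have expand: "?\<psi> ((w + smult l v)\<^sup>2) = ?\<psi> (w\<^sup>2) + 2 * l * ?\<psi> (v * w) + l\<^sup>2 * ?\<psi> (v\<^sup>2)"
    for l v w
    using linear
    by (simp add: power2_add_smult linear_functional_add linear_functional_smult mult.commute)
  have "0 \<le> (ip ?e ?e + 2 * ?\<psi> (w1\<^sup>2 + w2\<^sup>2)) + l * (4 * ?\<psi> (v1 * w1 + v2 * w2))" for l
  proof -
    have "degree (w1 + smult l v1) \<le> d" "degree (w2 + smult l v2) \<le> d"
      using v w by (auto intro!: degree_add_le degree_smult_leI)
    note second = row_second_variation[OF assms this]
    have "u i 0 * (w1 + smult l v1) + u i 1 * (w2 + smult l v2) = u i 0 * w1 + u i 1 * w2"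
      using arg_cong[OF syzygy, of "smult l"] by (simp add: algebra_simps smult_add_right)
    moreover have "?\<psi> ((w1 + smult l v1)\<^sup>2 + (w2 + smult l v2)\<^sup>2) =
        ?\<psi> (w1\<^sup>2 + w2\<^sup>2) + 2 * l * ?\<psi> (v1 * w1 + v2 * w2) + l\<^sup>2 * ?\<psi> (v1\<^sup>2 + v2\<^sup>2)"
      using linear by (simp add: linear_functional_add expand algebra_simps)
    ultimately show ?thesis using second null by (simp add: algebra_simps)
  qed
  then show "?\<psi> (v1 * w1 + v2 * w2) = 0"
    using affine_nonneg_imp_slope_zero by fastforce
qed

lemma row_functional_sos_nonneg: "i < m \<Longrightarrow> sos_form d q \<Longrightarrow> 0 \<le> row_functional i q"
  using sos_form_nonneg linear_functional_row syzygy_psd.square_nonneg syzygy_psd_row by metis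

lemma row_functional_gram:
  assumes "i < m"
  shows "row_functional i (\<Sum>j<r. (u i j)\<^sup>2) = 0"
proof -
  have "row_functional i (\<Sum>j<r. (u i j)\<^sup>2) = (\<Sum>j<r. row_functional i (u i j * u i j))"
    using linear_functional_sum[OF linear_functional_row[OF assms]] by (simp add: power2_eq_square)
  also have "\<dots> = 0"
    using row_functional_annihilates[OF assms] degree_u[OF assms] by (intro sum.neutral) simp
  finally show ?thesis .
qed

lemma ip_residual_row_sum:
  assumes "\<And>i. i < m \<Longrightarrow> degree (x i) \<le> 2 * d"
  shows "ip residual (\<Sum>i<m. a i * x i) = (\<Sum>i<m. row_functional i (x i))"
proof -
  have "degree (a i * x i) \<le> 2 * d + k" if "i < m" for i
    using degree_mult_leI[OF degree_a[OF that] assms[OF that]] by (simp add: add.commute)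
  then have "ip residual (\<Sum>i<m. a i * x i) = (\<Sum>i<m. ip residual (a i * x i))"
    by (intro sum_right) (auto simp: degree_residual)
  then show ?thesis using assms by (simp add: row_functional_eq)
qed

lemma fI_eq_0_of_sos:
  assumes sos: "\<forall>i<m. sos_form d (q i)" and p_eq: "p = (\<Sum>i<m. a i * q i)"
  shows "fI ip m r a p u = 0"
proof -
  let ?S = "\<Sum>i<m. a i * (\<Sum>j<r. (u i j)\<^sup>2)"
  have degree_gram: "degree (\<Sum>j<r. (u i j)\<^sup>2) \<le> 2 * d" if "i < m" for i
    using degree_u[OF that] by (auto intro!: degree_column_sum simp: power2_eq_square)
  have degree_S: "degree ?S \<le> 2 * d + k" by (rule degree_row_sum) (rule degree_gram)
  have "ip residual residual = ip residual ?S - ip residual p"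
    using diff_right[OF degree_S degree_p degree_residual]
    unfolding residual_def[symmetric] .
  also have "ip residual ?S = 0"
    using ip_residual_row_sum[OF degree_gram] by (simp add: row_functional_gram)
  also have "ip residual p = (\<Sum>i<m. row_functional i (q i))"
    using ip_residual_row_sum[of q] sos degree_sos_form unfolding p_eq[symmetric] by simp
  finally have "ip residual residual = - (\<Sum>i<m. row_functional i (q i))" by simp
  moreover have "0 \<le> (\<Sum>i<m. row_functional i (q i))"
    using sos by (intro sum_nonneg) (simp add: row_functional_sos_nonneg)
  ultimately have "ip residual residual \<le> 0" by simp
  then have "ip residual residual = 0" using nonneg[OF degree_residual] by simp
  then show ?thesis unfolding fI_def ip_norm_def residual_def[symmetric] by simp
qed

end

theorem corollary6p2:
  fixes r m d k :: nat
    and a q :: "nat \<Rightarrow> real poly"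
    and p :: "real poly"
    and ip :: "real poly \<Rightarrow> real poly \<Rightarrow> real"
    and u :: "nat \<Rightarrow> nat \<Rightarrow> real poly"
  assumes "r \<ge> 2" and "m \<ge> 1"
    and "\<forall>i<m. is_form k (a i)"
    and "\<forall>i<m. sos_form d (q i)"
    and "p = (\<Sum>i<m. a i * q i)"
    and "is_inner_product_on_forms (2 * d + k) ip"
    and "is_form_matrix d m r u"
    and grad: "\<forall>v. is_form_matrix d m r v \<longrightarrow>
                 deriv (\<lambda>t. fI ip m r a p (line_pt u v t)) 0 = 0"
    and hess: "\<forall>v. is_form_matrix d m r v \<longrightarrow>
                 deriv (deriv (\<lambda>t. fI ip m r a p (line_pt u v t))) 0 \<ge> 0"
  shows "fI ip m r a p u = 0"
proof -
  have "degree p \<le> 2 * d + k"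
    using assms(3-5) degree_sos_form degree_sum_mult_le[of "{..<m}" a k q "2 * d"]
    by (auto simp: is_form_def add.commute)
  then interpret critical_point d k ip r m a p u
    using assms by unfold_locales (auto simp: is_form_def is_form_matrix_def)
  show ?thesis using fI_eq_0_of_sos assms(4,5) .
qed

end
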